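(* Let $(\mathcal{G}(u_0,v_0),-\Omega^2\,du\,dv)$ with radial function $r$ and stress-energy components $T_{uu},T_{uv},T_{vv}$ be as described in the context, satisfying assumptions (I)–(VII). Suppose the marginally trapped tube $\mathcal{A}$ is nonempty and that condition (A), namely \[ T_{uv}\,\Omega^{-2} < \frac{1}{4r^2}, \] holds at every point of $\mathcal{A}$. Then each connected component of $\mathcal{A}$ is achronal and contains no ingoing null segments.
   Context: Fix double null coordinates $(u,v)$ on $\mathbb{R}^2$ with Minkowski metric $-du\,dv$, time-oriented so that $u$ and $v$ increase toward the future. For $u_0,v_0>0$ let $K(u_0,v_0)=[0,u_0]\times[v_0,\infty)$, $\mathcal{C}_{in}=[0,u_0]\times\{v_0\}$ and $\mathcal{C}_{out}=\{0\}\times[v_0,\infty)$; causal notions $J^\pm, I^\pm$ refer to $K(u_0,v_0)$ with the (conformal) metric. Let $\mathcal{G}(u_0,v_0)\subset K(u_0,v_0)$ be a globally hyperbolic, relatively open subset containing $\mathcal{C}_{in}\cup\mathcal{C}_{out}$, equipped with the metric $-\Omega^2\,du\,dv$ ($\Omega>0$ smooth), a smooth function $r\ge 0$ (the radial function) with $r>0$ on $\mathcal{C}_{in}\cup\mathcal{C}_{out}$, and smooth functions $T_{uu},T_{uv},T_{vv}$ (the components of the stress-energy tensor of the spherically symmetric spacetime $-\Omega^2du\,dv+r^2g_{S^2}$, with Einstein equations $R_{\alpha\beta}-\frac12Rg_{\alpha\beta}=2T_{\alpha\beta}$) such that $\partial_u(\Omega^{-2}\partial_u r)=-r\Omega^{-2}T_{uu}$,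 $\partial_v(\Omega^{-2}\partial_v r)=-r\Omega^{-2}T_{vv}$, $\partial_u m=2r^2\Omega^{-2}(T_{uv}\partial_u r-T_{uu}\partial_v r)$, $\partial_v m=2r^2\Omega^{-2}(T_{uv}\partial_v r-T_{vv}\partial_u r)$, where $m=\frac r2(1+4\Omega^{-2}\partial_u r\,\partial_v r)$ is the Hawking mass. Define the regular region $\mathcal{R}=\{\partial_v r>0,\partial_u r<0\}$, trapped region $\mathcal{T}=\{\partial_v r<0,\partial_u r<0\}$, and marginally trapped tube $\mathcal{A}=\{\partial_v r=0,\partial_u r<0\}$ (subsets of $\mathcal{G}(u_0,v_0)$). Let $r_+=\sup_{\mathcal{C}_{out}}r$, $m_+=\sup_{\mathcal{C}_{out}}m$. Assumptions: (I) $T_{uu},T_{uv},T_{vv}\ge0$ on $\mathcal{G}(u_0,v_0)$; (II) $J^-(\mathcal{G}(u_0,v_0))\subset\mathcal{G}(u_0,v_0)$; (III) $r\le r_+<\infty$ along $\mathcal{C}_{out}$; (IV) $0\le m\le m_+<\infty$ along $\mathcal{C}_{out}$; (V) $\partial_u r<0$ along $\mathcal{C}_{out}$; (VI) $\partial_v r>0$ along $\mathcal{C}_{out}$; (VII) (extension principle, closures taken in $K(u_0,v_0)$) if $p\in\overline{\mathcal{R}}$ and $q\in\overline{\mathcal{R}}\cap I^-(p)$ with $J^-(p)\cap J^+(q)\setminus\{p\}\subset\mathcal{R}\cup\mathcal{A}$, then $p\in\mathcal{R}\cup\mathcal{A}$. An ingoing null segment is a segment of a line $\{v=\text{const}\}$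 (direction $\partial_u$); outgoing null segments lie on lines $\{u=\text{const}\}$. *)

theory Defs
  imports "HOL-Analysis.Analysis"
begin

definition pu :: "(real \<times> real \<Rightarrow> real) \<Rightarrow> real \<times> real \<Rightarrow> real" where
  "pu f p = (THE d. ((\<lambda>t. f (fst p + t, snd p)) has_real_derivative d) (at 0))"

definition pv :: "(real \<times> real \<Rightarrow> real) \<Rightarrow> real \<times> real \<Rightarrow> real" where
  "pv f p = (THE d. ((\<lambda>t. f (fst p, snd p + t)) has_real_derivative d) (at 0))"

text \<open>Iterated partial derivatives (True = d/du, False = d/dv).\<close>
fun dpart :: "bool list \<Rightarrow> (real \<times> real \<Rightarrow> real) \<Rightarrow> real \<times> real \<Rightarrow> real" where
  "dpart [] f = f"
| "dpart (b # bs) f = (if b then pu else pv) (dpart bs f)"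

text \<open>Smoothness on a (possibly non-open) set S: f is C-infinity on some open
  neighbourhood of S (all iterated partials are differentiable there).\<close>
definition smooth_near :: "(real \<times> real) set \<Rightarrow> (real \<times> real \<Rightarrow> real) \<Rightarrow> bool" where
  "smooth_near S f \<longleftrightarrow> (\<exists>U. open U \<and> S \<subseteq> U \<and> (\<forall>ds. dpart ds f differentiable_on U))"

definition Kreg :: "real \<Rightarrow> real \<Rightarrow> (real \<times> real) set" where
  "Kreg u0 v0 = {p. 0 \<le> fst p \<and> fst p \<le> u0 \<and> v0 \<le> snd p}"

definition Cin :: "real \<Rightarrow> real \<Rightarrow> (real \<times> real) set" where
  "Cin u0 v0 = {p. 0 \<le> fst p \<and> fst p \<le> u0 \<and> snd p = v0}"

definition Cout :: "real \<Rightarrow> real \<Rightarrow> (real \<times> real) set" where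
  "Cout u0 v0 = {p. fst p = 0 \<and> v0 \<le> snd p}"

text \<open>Causal structure of K (conformally Minkowski, K convex): q is in J^+(p) iff
  u and v both do not decrease; q in I^+(p) iff both strictly increase.\<close>
definition causal_le :: "real \<times> real \<Rightarrow> real \<times> real \<Rightarrow> bool" where
  "causal_le p q \<longleftrightarrow> fst p \<le> fst q \<and> snd p \<le> snd q"

definition chron_less :: "real \<times> real \<Rightarrow> real \<times> real \<Rightarrow> bool" where
  "chron_less p q \<longleftrightarrow> fst p < fst q \<and> snd p < snd q"

definition Jplus :: "real \<Rightarrow> real \<Rightarrow> real \<times> real \<Rightarrow> (real \<times> real) set" where
  "Jplus u0 v0 p = {q \<in> Kreg u0 v0. causal_le p q}"

definition Jminus :: "real \<Rightarrow> real \<Rightarrow> real \<times> real \<Rightarrow> (real \<times> real) set" where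
  "Jminus u0 v0 p = {q \<in> Kreg u0 v0. causal_le q p}"

definition Iminus :: "real \<Rightarrow> real \<Rightarrow> real \<times> real \<Rightarrow> (real \<times> real) set" where
  "Iminus u0 v0 p = {q \<in> Kreg u0 v0. chron_less q p}"

definition Jminus_set :: "real \<Rightarrow> real \<Rightarrow> (real \<times> real) set \<Rightarrow> (real \<times> real) set" where
  "Jminus_set u0 v0 S = (\<Union>p\<in>S. Jminus u0 v0 p)"

text \<open>Global hyperbolicity of a subset G of the 2d conformally flat region:
  all causal diamonds J^+(p) \<inter> J^-(q) (p, q in G) lie in G and are compact
  (causality is automatic in the (u,v)-plane).\<close>
definition glob_hyp :: "real \<Rightarrow> real \<Rightarrow> (real \<times> real) set \<Rightarrow> bool" where
  "glob_hyp u0 v0 G \<longleftrightarrow> (\<forall>p\<in>G. \<forall>q\<in>G.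
      Jplus u0 v0 p \<inter> Jminus u0 v0 q \<subseteq> G \<and> compact (Jplus u0 v0 p \<inter> Jminus u0 v0 q))"

definition hawking_mass ::
  "(real \<times> real \<Rightarrow> real) \<Rightarrow> (real \<times> real \<Rightarrow> real) \<Rightarrow> real \<times> real \<Rightarrow> real" where
  "hawking_mass \<Omega> r p = r p / 2 * (1 + 4 * (\<Omega> p)\<^sup>2 powi (-1) * pu r p * pv r p)"

definition regR :: "(real \<times> real) set \<Rightarrow> (real \<times> real \<Rightarrow> real) \<Rightarrow> (real \<times> real) set" where
  "regR G r = {p \<in> G. pv r p > 0 \<and> pu r p < 0}"

definition trapT :: "(real \<times> real) set \<Rightarrow> (real \<times> real \<Rightarrow> real) \<Rightarrow> (real \<times> real) set" where
  "trapT G r = {p \<in> G. pv r p < 0 \<and> pu r p < 0}"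

definition mttA :: "(real \<times> real) set \<Rightarrow> (real \<times> real \<Rightarrow> real) \<Rightarrow> (real \<times> real) set" where
  "mttA G r = {p \<in> G. pv r p = 0 \<and> pu r p < 0}"

definition achronal :: "(real \<times> real) set \<Rightarrow> bool" where
  "achronal S \<longleftrightarrow> (\<forall>p\<in>S. \<forall>q\<in>S. \<not> chron_less p q)"

definition ingoing_segment :: "real \<Rightarrow> real \<Rightarrow> real \<Rightarrow> (real \<times> real) set" where
  "ingoing_segment a b c = {p. a \<le> fst p \<and> fst p \<le> b \<and> snd p = c}"

end

theory Submission
  imports Defs
begin

text \<open>By the Raychaudhuri equations \<open>\<Omega>\<^sup>-\<^sup>2 \<partial>\<^sub>u r\<close> is nonincreasing in \<open>u\<close> and
  \<open>\<Omega>\<^sup>-\<^sup>2 \<partial>\<^sub>v r\<close> is nonincreasing in \<open>v\<close>. The first fact propagates \<open>\<partial>\<^sub>u r < 0\<close> from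
  \<open>C\<^sub>o\<^sub>u\<^sub>t\<close> to the whole region, so \<open>\<A>\<close> is just the zero set of \<open>\<partial>\<^sub>v r\<close>. At a point of \<open>\<A>\<close>,
  differentiating the Hawking mass in \<open>u\<close> and comparing with the equation for \<open>\<partial>\<^sub>u m\<close> gives
  \<open>\<partial>\<^sub>u r (1/2 + 2 r \<Omega>\<^sup>-\<^sup>2 \<partial>\<^sub>u\<partial>\<^sub>v r - 2 r\<^sup>2 \<Omega>\<^sup>-\<^sup>2 T\<^sub>u\<^sub>v) = 0\<close>, and condition (A) turns
  this into \<open>\<partial>\<^sub>u\<partial>\<^sub>v r < 0\<close>. Hence \<open>\<partial>\<^sub>v r\<close> crosses zero downwards along every ingoing ray, which
  therefore meets \<open>\<A>\<close> at most once. Just to the right of a point \<open>(a, b) \<in> \<A>\<close> we have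
  \<open>\<partial>\<^sub>v r < 0\<close> on the ingoing ray, and by monotonicity in \<open>v\<close> also above it, so \<open>\<A>\<close> misses a
  thin box \<open>a < u < a + \<delta>, v > b\<close>. A connected subset of \<open>\<A>\<close> through \<open>(a, b)\<close> avoiding
  this box and the ingoing ray cannot reach the chronological future of \<open>(a, b)\<close>.\<close>

lemma pu_eqI:
  assumes "((\<lambda>s. F (s, b)) has_real_derivative d) (at a)"
  shows "pu F (a, b) = d"
proof -
  have "((\<lambda>t. F (a + t, b)) has_real_derivative d) (at 0)"
    using assms DERIV_shift[of "\<lambda>s. F (s, b)" d 0 a] by (simp add: add.commute)
  then show ?thesis
    unfolding pu_def by (auto intro: DERIV_unique)
qed

lemma pv_eqI:
  assumes "((\<lambda>s. F (a, s)) has_real_derivative d) (at b)"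
  shows "pv F (a, b) = d"
proof -
  have "((\<lambda>t. F (a, b + t)) has_real_derivative d) (at 0)"
    using assms DERIV_shift[of "\<lambda>s. F (a, s)" d 0 b] by (simp add: add.commute)
  then show ?thesis
    unfolding pv_def by (auto intro: DERIV_unique)
qed

lemma has_real_derivative_pu:
  assumes "F differentiable (at (a, b))"
  shows "((\<lambda>s. F (s, b)) has_real_derivative pu F (a, b)) (at a)"
proof -
  have "(F \<circ> (\<lambda>s. (s, b))) differentiable (at a)"
    using assms by (intro differentiable_chain_at) simp_all
  then obtain d where "((\<lambda>s. F (s, b)) has_real_derivative d) (at a)"
    by (auto simp: o_def elim: real_differentiableE)
  with pu_eqI show ?thesis by metis
qed

lemma has_real_derivative_pv:
  assumes "F differentiable (at (a, b))"
  shows "((\<lambda>s. F (a, s)) has_real_derivative pv F (a, b)) (at b)"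
proof -
  have "(F \<circ> (\<lambda>s. (a, s))) differentiable (at b)"
    using assms by (intro differentiable_chain_at) simp_all
  then obtain d where "((\<lambda>s. F (a, s)) has_real_derivative d) (at b)"
    by (auto simp: o_def elim: real_differentiableE)
  with pv_eqI show ?thesis by metis
qed

lemma smooth_near_differentiable_at:
  assumes "smooth_near S f" "p \<in> S"
  shows "dpart ds f differentiable (at p)"
  using assms unfolding smooth_near_def
  by (meson differentiable_on_eq_differentiable_at subsetD)

lemma pu_hawking_mass_at_pv_zero:
  assumes "\<Omega> differentiable (at (a, b))" "\<Omega> (a, b) \<noteq> 0"
    and "r differentiable (at (a, b))" "pu r differentiable (at (a, b))"
    and "pv r differentiable (at (a, b))" "pv r (a, b) = 0"
  shows "pu (hawking_mass \<Omega> r) (a, b)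
           = pu r (a, b) * (1/2 + 2 * r (a, b) * (\<Omega> (a, b))\<^sup>2 powi (-1) * pu (pv r) (a, b))"
proof (rule pu_eqI)
  have "(\<lambda>q. (\<Omega> q)\<^sup>2 powi (-1)) differentiable (at (a, b))"
    using assms(1,2) by (intro derivative_intros) auto
  note lines = has_real_derivative_pu[OF this] has_real_derivative_pu[OF assms(3)]
    has_real_derivative_pu[OF assms(4)] has_real_derivative_pu[OF assms(5)]
  show "((\<lambda>s. hawking_mass \<Omega> r (s, b)) has_real_derivative
          pu r (a, b) * (1/2 + 2 * r (a, b) * (\<Omega> (a, b))\<^sup>2 powi (-1) * pu (pv r) (a, b))) (at a)"
    unfolding hawking_mass_def
    by (rule derivative_eq_intros lines refl | simp add: assms(6) algebra_simps)+
qed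

lemma zero_unique_if_deriv_neg_at_zeros:
  fixes h :: "real \<Rightarrow> real"
  assumes "a \<le> b" and cont: "continuous_on {a..b} h" and "h a = 0" "h b = 0"
    and neg_deriv: "\<And>s. a \<le> s \<Longrightarrow> s \<le> b \<Longrightarrow> h s = 0 \<Longrightarrow> \<exists>D<0. (h has_real_derivative D) (at s)"
  shows "a = b"
proof (rule ccontr)
  assume "a \<noteq> b"
  with \<open>a \<le> b\<close> have "a < b" by simp
  obtain D where "D < 0" "(h has_real_derivative D) (at a)"
    using neg_deriv[of a] \<open>a < b\<close> \<open>h a = 0\<close> by auto
  then obtain d where "d > 0" and right_of_a: "\<And>t. 0 < t \<Longrightarrow> t < d \<Longrightarrow> h (a + t) < 0"
    using DERIV_neg_dec_right \<open>h a = 0\<close> by metis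
  define a' where "a' = a + min d (b - a) / 2"
  have "a < a'" "a' < b"
    using \<open>d > 0\<close> \<open>a < b\<close> by (simp_all add: a'_def min_def field_simps)
  have "h a' < 0"
    using \<open>d > 0\<close> \<open>a < b\<close> right_of_a by (simp add: a'_def min_def)
  define Z where "Z = {s \<in> {a'..b}. h s = 0}"
  have "closed Z"
    unfolding Z_def using \<open>a < a'\<close>
    by (intro continuous_closed_preimage_constant continuous_on_subset[OF cont]) auto
  moreover have "b \<in> Z" "bdd_below Z"
    using \<open>a' < b\<close> \<open>h b = 0\<close> by (auto simp: Z_def intro: bdd_belowI[of _ a'])
  ultimately have "Inf Z \<in> Z"
    using closed_contains_Inf by blast
  define s where "s = Inf Z"
  have s: "a' < s" "s \<le> b" "h s = 0"
    using \<open>Inf Z \<in> Z\<close> \<open>h a' < 0\<close> by (auto simp: Z_def s_def less_eq_real_def)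
  obtain E where "E < 0" "(h has_real_derivative E) (at s)"
    using neg_deriv[of s] s \<open>a < a'\<close> by auto
  then obtain e where "e > 0" and left_of_s: "\<And>t. 0 < t \<Longrightarrow> t < e \<Longrightarrow> h (s - t) > 0"
    using DERIV_neg_dec_left \<open>h s = 0\<close> by metis
  define t where "t = s - min e (s - a') / 2"
  have "a' < t" "t < s"
    using \<open>e > 0\<close> s by (simp_all add: t_def min_def field_simps)
  have "h t > 0"
    using \<open>e > 0\<close> s left_of_s by (simp add: t_def min_def)
  obtain z where "a' \<le> z" "z \<le> t" "h z = 0"
    using IVT'[of h a' 0 t] \<open>h a' < 0\<close> \<open>h t > 0\<close> \<open>a' < t\<close> \<open>t < s\<close> \<open>a < a'\<close> s
      continuous_on_subset[OF cont, of "{a'..t}"] by fastforce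
  then have "z \<in> Z"
    using \<open>t < s\<close> s by (auto simp: Z_def)
  then have "s \<le> z"
    unfolding s_def using \<open>bdd_below Z\<close> by (rule cInf_lower)
  with \<open>z \<le> t\<close> \<open>t < s\<close> show False by simp
qed

lemma connected_not_chron_less:
  fixes C :: "(real \<times> real) set"
  assumes "connected C" "(a, b) \<in> C" "d > 0"
    and box_free: "C \<inter> {a<..<a + d} \<times> {b<..} = {}"
    and ray_free: "C \<inter> {a<..} \<times> {b} = {}"
    and "q \<in> C"
  shows "\<not> chron_less (a, b) q"
proof
  assume "chron_less (a, b) q"
  define U1 :: "(real \<times> real) set" where "U1 = {..<a + d} \<times> UNIV \<union> UNIV \<times> {..<b}"
  define U2 :: "(real \<times> real) set" where "U2 = {a<..} \<times> {b<..}"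
  have "open U1" "open U2"
    unfolding U1_def U2_def by (intro open_Un open_Times open_lessThan open_greaterThan open_UNIV)+
  moreover have "U1 \<inter> U2 \<inter> C = {}"
    using box_free by (auto simp: U1_def U2_def)
  moreover have "C \<subseteq> U1 \<union> U2"
    using box_free ray_free \<open>d > 0\<close> by (fastforce simp: U1_def U2_def)
  ultimately have "U1 \<inter> C = {} \<or> U2 \<inter> C = {}"
    using connectedD[OF \<open>connected C\<close>] by blast
  moreover have "(a, b) \<in> U1" "q \<in> U2"
    using \<open>d > 0\<close> \<open>chron_less (a, b) q\<close> by (auto simp: U1_def U2_def chron_less_def mem_Times_iff)
  ultimately show False
    using \<open>(a, b) \<in> C\<close> \<open>q \<in> C\<close> by blast
qed

locale raychaudhuri_region =
  fixes u0 v0 :: real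
    and G :: "(real \<times> real) set"
    and \<Omega> r Tuu Tvv :: "real \<times> real \<Rightarrow> real"
  assumes G_sub: "G \<subseteq> Kreg u0 v0"
    and past_closed: "Jminus_set u0 v0 G \<subseteq> G"
    and Cout_sub: "Cout u0 v0 \<subseteq> G"
    and smooth_Omega: "smooth_near G \<Omega>"
    and smooth_r: "smooth_near G r"
    and Omega_pos: "\<And>p. p \<in> G \<Longrightarrow> \<Omega> p > 0"
    and r_nonneg: "\<And>p. p \<in> G \<Longrightarrow> r p \<ge> 0"
    and Tuu_nonneg: "\<And>p. p \<in> G \<Longrightarrow> Tuu p \<ge> 0"
    and Tvv_nonneg: "\<And>p. p \<in> G \<Longrightarrow> Tvv p \<ge> 0"
    and eq_uu: "\<And>p. p \<in> G \<Longrightarrow>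
      pu (\<lambda>q. (\<Omega> q)\<^sup>2 powi (-1) * pu r q) p = - r p * (\<Omega> p)\<^sup>2 powi (-1) * Tuu p"
    and eq_vv: "\<And>p. p \<in> G \<Longrightarrow>
      pv (\<lambda>q. (\<Omega> q)\<^sup>2 powi (-1) * pv r q) p = - r p * (\<Omega> p)\<^sup>2 powi (-1) * Tvv p"
    and pu_r_Cout: "\<And>p. p \<in> Cout u0 v0 \<Longrightarrow> pu r p < 0"
begin

lemma causal_past_mem:
  assumes "x \<in> G" "0 \<le> s" "s \<le> fst x" "v0 \<le> w" "w \<le> snd x"
  shows "(s, w) \<in> G"
proof -
  have "(s, w) \<in> Jminus u0 v0 x"
    using assms G_sub by (auto simp: Jminus_def Kreg_def causal_le_def)
  then show ?thesis
    using past_closed \<open>x \<in> G\<close> by (auto simp: Jminus_set_def)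
qed

lemma mem_G_Kreg:
  assumes "(a, b) \<in> G"
  shows "0 \<le> a" "a \<le> u0" "v0 \<le> b"
  using assms G_sub by (auto simp: Kreg_def)

lemma differentiable_r_partials:
  assumes "p \<in> G"
  shows "r differentiable (at p)" "pu r differentiable (at p)" "pv r differentiable (at p)"
    and "pu (pv r) differentiable (at p)"
  using smooth_near_differentiable_at[OF smooth_r assms, of "[]"]
    smooth_near_differentiable_at[OF smooth_r assms, of "[True]"]
    smooth_near_differentiable_at[OF smooth_r assms, of "[False]"]
    smooth_near_differentiable_at[OF smooth_r assms, of "[True, False]"]
  by simp_all

lemma differentiable_conformal_factor:
  assumes "p \<in> G" "F differentiable (at p)"
  shows "(\<lambda>q. (\<Omega> q)\<^sup>2 powi (-1) * F q) differentiable (at p)"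
  using smooth_near_differentiable_at[OF smooth_Omega assms(1), of "[]"] Omega_pos[OF assms(1)] assms(2)
  by (intro derivative_intros) auto

lemma ingoing_expansion_antimono:
  assumes "(a, b) \<in> G" "0 \<le> s" "s \<le> a"
  shows "(\<Omega> (a, b))\<^sup>2 powi (-1) * pu r (a, b) \<le> (\<Omega> (s, b))\<^sup>2 powi (-1) * pu r (s, b)"
proof (rule DERIV_nonpos_imp_nonincreasing[where f = "\<lambda>x. (\<Omega> (x, b))\<^sup>2 powi (-1) * pu r (x, b)"])
  fix x assume "s \<le> x" "x \<le> a"
  then have "(x, b) \<in> G"
    using assms mem_G_Kreg[OF assms(1)] by (intro causal_past_mem[OF assms(1)]) auto
  have "((\<lambda>x. (\<Omega> (x, b))\<^sup>2 powi (-1) * pu r (x, b)) has_real_derivative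
          - r (x, b) * (\<Omega> (x, b))\<^sup>2 powi (-1) * Tuu (x, b)) (at x)"
    using has_real_derivative_pu[OF differentiable_conformal_factor[OF _ differentiable_r_partials(2)]]
      eq_uu \<open>(x, b) \<in> G\<close> by simp
  moreover have "0 \<le> r (x, b) * (\<Omega> (x, b))\<^sup>2 powi (-1) * Tuu (x, b)"
    using r_nonneg Tuu_nonneg Omega_pos \<open>(x, b) \<in> G\<close> by simp
  ultimately show "\<exists>y. ((\<lambda>x. (\<Omega> (x, b))\<^sup>2 powi (-1) * pu r (x, b)) has_real_derivative y) (at x) \<and> y \<le> 0"
    by auto
qed (use assms in auto)

lemma outgoing_expansion_antimono:
  assumes "(a, b) \<in> G" "v0 \<le> w" "w \<le> b"
  shows "(\<Omega> (a, b))\<^sup>2 powi (-1) * pv r (a, b) \<le> (\<Omega> (a, w))\<^sup>2 powi (-1) * pv r (a, w)"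
proof (rule DERIV_nonpos_imp_nonincreasing[where f = "\<lambda>y. (\<Omega> (a, y))\<^sup>2 powi (-1) * pv r (a, y)"])
  fix y assume "w \<le> y" "y \<le> b"
  then have "(a, y) \<in> G"
    using assms mem_G_Kreg[OF assms(1)] by (intro causal_past_mem[OF assms(1)]) auto
  have "((\<lambda>y. (\<Omega> (a, y))\<^sup>2 powi (-1) * pv r (a, y)) has_real_derivative
          - r (a, y) * (\<Omega> (a, y))\<^sup>2 powi (-1) * Tvv (a, y)) (at y)"
    using has_real_derivative_pv[OF differentiable_conformal_factor[OF _ differentiable_r_partials(3)]]
      eq_vv \<open>(a, y) \<in> G\<close> by simp
  moreover have "0 \<le> r (a, y) * (\<Omega> (a, y))\<^sup>2 powi (-1) * Tvv (a, y)"
    using r_nonneg Tvv_nonneg Omega_pos \<open>(a, y) \<in> G\<close> by simp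
  ultimately show "\<exists>z. ((\<lambda>y. (\<Omega> (a, y))\<^sup>2 powi (-1) * pv r (a, y)) has_real_derivative z) (at y) \<and> z \<le> 0"
    by auto
qed (use assms in auto)

lemma pu_r_neg:
  assumes "p \<in> G"
  shows "pu r p < 0"
proof -
  obtain a b where p: "p = (a, b)" by fastforce
  have "(0, b) \<in> Cout u0 v0"
    using mem_G_Kreg assms p by (auto simp: Cout_def)
  then have "(\<Omega> (0, b))\<^sup>2 powi (-1) * pu r (0, b) < 0"
    using pu_r_Cout Cout_sub Omega_pos[of "(0, b)"] by (simp add: mult_pos_neg subset_iff)
  moreover have "(\<Omega> (a, b))\<^sup>2 powi (-1) * pu r (a, b) \<le> (\<Omega> (0, b))\<^sup>2 powi (-1) * pu r (0, b)"
    using assms mem_G_Kreg p by (intro ingoing_expansion_antimono) auto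
  ultimately have "(\<Omega> (a, b))\<^sup>2 powi (-1) * pu r (a, b) < 0"
    by linarith
  then show ?thesis
    using Omega_pos[OF assms] p by (simp add: mult_less_0_iff)
qed

lemma mttA_iff: "p \<in> mttA G r \<longleftrightarrow> p \<in> G \<and> pv r p = 0"
  using pu_r_neg[of p] by (auto simp: mttA_def)

end

locale mtt_condition_A = raychaudhuri_region +
  fixes Tuv :: "real \<times> real \<Rightarrow> real"
  assumes Tuv_nonneg: "\<And>p. p \<in> G \<Longrightarrow> Tuv p \<ge> 0"
    and eq_mu: "\<And>p. p \<in> G \<Longrightarrow> pu (hawking_mass \<Omega> r) p
      = 2 * (r p)\<^sup>2 * (\<Omega> p)\<^sup>2 powi (-1) * (Tuv p * pu r p - Tuu p * pv r p)"
    and condition_A: "\<And>p. p \<in> mttA G r \<Longrightarrow> Tuv p * (\<Omega> p)\<^sup>2 powi (-1) < 1 / (4 * (r p)\<^sup>2)"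
begin

text \<open>At \<open>r = 0\<close> the right-hand side of condition (A) is \<open>1 / 0 = 0\<close> in HOL, so together with
  \<open>Tuv \<ge> 0\<close> the condition itself forces \<open>r > 0\<close> on the marginally trapped tube.\<close>

lemma r_pos_mttA:
  assumes "p \<in> mttA G r"
  shows "r p > 0"
proof (rule ccontr)
  assume "\<not> r p > 0"
  moreover have "p \<in> G"
    using assms by (simp add: mttA_def)
  ultimately have "r p = 0"
    using r_nonneg[of p] by linarith
  moreover have "Tuv p * (\<Omega> p)\<^sup>2 powi (-1) \<ge> 0"
    using Tuv_nonneg assms by (simp add: mttA_iff)
  ultimately show False
    using condition_A[OF assms] by simp
qed

lemma pu_pv_r_neg_mttA:
  assumes "p \<in> mttA G r"
  shows "pu (pv r) p < 0"
proof -
  obtain a b where p: "p = (a, b)" by fastforce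
  have "p \<in> G" "pv r p = 0" "pu r p < 0" "r p > 0" "\<Omega> p > 0"
    using assms r_pos_mttA Omega_pos by (auto simp: mttA_def)
  define W where "W = (\<Omega> p)\<^sup>2 powi (-1)"
  have "W > 0"
    using \<open>\<Omega> p > 0\<close> by (simp add: W_def)
  have "pu (hawking_mass \<Omega> r) p = pu r p * (1/2 + 2 * r p * W * pu (pv r) p)"
    unfolding p W_def
    using smooth_near_differentiable_at[OF smooth_Omega \<open>p \<in> G\<close>, of "[]"] differentiable_r_partials[OF \<open>p \<in> G\<close>]
      \<open>pv r p = 0\<close> \<open>\<Omega> p > 0\<close>
    by (intro pu_hawking_mass_at_pv_zero) (simp_all add: p)
  moreover have "pu (hawking_mass \<Omega> r) p = pu r p * (2 * (r p)\<^sup>2 * W * Tuv p)"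
    using eq_mu[OF \<open>p \<in> G\<close>] \<open>pv r p = 0\<close> by (simp add: W_def mult_ac)
  ultimately have "1/2 + 2 * r p * W * pu (pv r) p = 2 * (r p)\<^sup>2 * W * Tuv p"
    using \<open>pu r p < 0\<close> by simp
  moreover have "4 * (r p)\<^sup>2 * W * Tuv p < 1"
    using condition_A[OF assms] \<open>r p > 0\<close> by (simp add: W_def pos_less_divide_eq mult_ac)
  ultimately have "r p * W * pu (pv r) p < 0"
    by linarith
  then show ?thesis
    using \<open>r p > 0\<close> \<open>W > 0\<close> by (simp add: mult_less_0_iff)
qed

lemma mttA_ingoing_unique_ordered:
  assumes "(a, c) \<in> mttA G r" "(b, c) \<in> mttA G r" "a \<le> b"
  shows "a = b"
proof (rule zero_unique_if_deriv_neg_at_zeros[where h = "\<lambda>s. pv r (s, c)"])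
  have "(a, c) \<in> G" "(b, c) \<in> G"
    using assms by (simp_all add: mttA_iff)
  have segment_G: "(s, c) \<in> G" if "a \<le> s" "s \<le> b" for s
    using mem_G_Kreg[OF \<open>(a, c) \<in> G\<close>] that by (intro causal_past_mem[OF \<open>(b, c) \<in> G\<close>]) auto
  have deriv: "((\<lambda>s. pv r (s, c)) has_real_derivative pu (pv r) (s, c)) (at s)"
    if "a \<le> s" "s \<le> b" for s
    using has_real_derivative_pu[OF differentiable_r_partials(3)[OF segment_G[OF that]]] .
  show "continuous_on {a..b} (\<lambda>s. pv r (s, c))"
    by (intro continuous_at_imp_continuous_on ballI DERIV_isCont[OF deriv]) auto
  show "\<exists>D<0. ((\<lambda>s. pv r (s, c)) has_real_derivative D) (at s)"
    if "a \<le> s" "s \<le> b" "pv r (s, c) = 0" for s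
  proof -
    have "(s, c) \<in> mttA G r"
      using segment_G[OF that(1,2)] that(3) by (simp add: mttA_iff)
    then show ?thesis
      using deriv[OF that(1,2)] pu_pv_r_neg_mttA by blast
  qed
qed (use assms in \<open>simp_all add: mttA_iff\<close>)

lemma mttA_ingoing_unique:
  assumes "(a, c) \<in> mttA G r" "(b, c) \<in> mttA G r"
  shows "a = b"
  using assms mttA_ingoing_unique_ordered by (metis linorder_le_cases)

lemma mttA_chron_future_box_free:
  assumes "(a, b) \<in> mttA G r"
  obtains d where "d > 0" "mttA G r \<inter> {a<..<a + d} \<times> {b<..} = {}"
proof -
  have "((\<lambda>s. pv r (s, b)) has_real_derivative pu (pv r) (a, b)) (at a)"
    using has_real_derivative_pu differentiable_r_partials(3) assms by (simp add: mttA_iff)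
  then obtain d where "d > 0" and pv_r_neg: "\<And>t. 0 < t \<Longrightarrow> t < d \<Longrightarrow> pv r (a + t, b) < 0"
    using DERIV_neg_dec_right pu_pv_r_neg_mttA[OF assms] assms by (metis mttA_iff)
  have False if "(u, v) \<in> mttA G r" "a < u" "u < a + d" "b < v" for u v
  proof -
    have "(u, v) \<in> G" "pv r (u, v) = 0"
      using that by (auto simp: mttA_iff)
    have "(u, b) \<in> G"
      using that assms mem_G_Kreg[of a b] by (intro causal_past_mem[OF \<open>(u, v) \<in> G\<close>]) (auto simp: mttA_iff)
    have "pv r (u, b) < 0"
      using pv_r_neg[of "u - a"] that by simp
    then have "(\<Omega> (u, b))\<^sup>2 powi (-1) * pv r (u, b) < 0"
      using Omega_pos[OF \<open>(u, b) \<in> G\<close>] by (simp add: mult_pos_neg)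
    moreover have "(\<Omega> (u, v))\<^sup>2 powi (-1) * pv r (u, v) \<le> (\<Omega> (u, b))\<^sup>2 powi (-1) * pv r (u, b)"
      using that assms mem_G_Kreg[of a b] by (intro outgoing_expansion_antimono \<open>(u, v) \<in> G\<close>) (auto simp: mttA_iff)
    ultimately show False
      using \<open>pv r (u, v) = 0\<close> by simp
  qed
  then have "mttA G r \<inter> {a<..<a + d} \<times> {b<..} = {}"
    by fastforce
  with that \<open>d > 0\<close> show ?thesis .
qed

lemma connected_subset_mttA_imp_achronal:
  assumes "connected C" "C \<subseteq> mttA G r"
  shows "achronal C"
  unfolding achronal_def
proof (intro ballI)
  fix p q assume "p \<in> C" "q \<in> C"
  obtain a b where p: "p = (a, b)" by fastforce
  have "(a, b) \<in> mttA G r"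
    using \<open>p \<in> C\<close> assms(2) p by blast
  then obtain d where "d > 0" "mttA G r \<inter> {a<..<a + d} \<times> {b<..} = {}"
    by (rule mttA_chron_future_box_free)
  moreover have "C \<inter> {a<..} \<times> {b} = {}"
    using mttA_ingoing_unique \<open>p \<in> C\<close> assms(2) p by fastforce
  ultimately show "\<not> chron_less p q"
    using connected_not_chron_less[OF assms(1)] \<open>p \<in> C\<close> \<open>q \<in> C\<close> assms(2) p by blast
qed

lemma ingoing_segment_not_subset_mttA:
  assumes "a < b"
  shows "\<not> ingoing_segment a b c \<subseteq> mttA G r"
proof
  assume "ingoing_segment a b c \<subseteq> mttA G r"
  moreover have "(a, c) \<in> ingoing_segment a b c" "(b, c) \<in> ingoing_segment a b c"
    using assms by (simp_all add: ingoing_segment_def)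
  ultimately have "a = b"
    using mttA_ingoing_unique by blast
  with assms show False by simp
qed

end

theorem proposition3:
  fixes u0 v0 :: real
    and G :: "(real \<times> real) set"
    and \<Omega> r Tuu Tuv Tvv :: "real \<times> real \<Rightarrow> real"
  defines "K \<equiv> Kreg u0 v0"
    and "m \<equiv> hawking_mass \<Omega> r"
    and "R \<equiv> regR G r"
    and "A \<equiv> mttA G r"
  assumes u0: "u0 > 0" and v0: "v0 > 0"
    and G_sub: "G \<subseteq> K"
    and G_open: "openin (top_of_set K) G"
    and G_gh: "glob_hyp u0 v0 G"
    and G_init: "Cin u0 v0 \<union> Cout u0 v0 \<subseteq> G"
    and smooth: "smooth_near G \<Omega>" "smooth_near G r" "smooth_near G Tuu"
                "smooth_near G Tuv" "smooth_near G Tvv"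
    and Omega_pos: "\<forall>p\<in>G. \<Omega> p > 0"
    and r_nonneg: "\<forall>p\<in>G. r p \<ge> 0"
    and r_pos_init: "\<forall>p\<in>Cin u0 v0 \<union> Cout u0 v0. r p > 0"
    and eq_uu: "\<forall>p\<in>G. pu (\<lambda>q. (\<Omega> q)\<^sup>2 powi (-1) * pu r q) p = - r p * (\<Omega> p)\<^sup>2 powi (-1) * Tuu p"
    and eq_vv: "\<forall>p\<in>G. pv (\<lambda>q. (\<Omega> q)\<^sup>2 powi (-1) * pv r q) p = - r p * (\<Omega> p)\<^sup>2 powi (-1) * Tvv p"
    and eq_mu: "\<forall>p\<in>G. pu m p = 2 * (r p)\<^sup>2 * (\<Omega> p)\<^sup>2 powi (-1) * (Tuv p * pu r p - Tuu p * pv r p)"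
    and eq_mv: "\<forall>p\<in>G. pv m p = 2 * (r p)\<^sup>2 * (\<Omega> p)\<^sup>2 powi (-1) * (Tuv p * pv r p - Tvv p * pu r p)"
    and I: "\<forall>p\<in>G. Tuu p \<ge> 0 \<and> Tuv p \<ge> 0 \<and> Tvv p \<ge> 0"
    and II: "Jminus_set u0 v0 G \<subseteq> G"
    and III: "bdd_above (r ` Cout u0 v0)"
    and IV: "\<forall>p\<in>Cout u0 v0. m p \<ge> 0" "bdd_above (m ` Cout u0 v0)"
    and V: "\<forall>p\<in>Cout u0 v0. pu r p < 0"
    and VI: "\<forall>p\<in>Cout u0 v0. pv r p > 0"
    and VII: "\<And>p q. p \<in> closure R \<inter> K \<Longrightarrow> q \<in> closure R \<inter> K \<inter> Iminus u0 v0 p \<Longrightarrow>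
               Jminus u0 v0 p \<inter> Jplus u0 v0 q - {p} \<subseteq> R \<union> A \<Longrightarrow> p \<in> R \<union> A"
    and A_ne: "A \<noteq> {}"
    and cond_A: "\<forall>p\<in>A. Tuv p * (\<Omega> p)\<^sup>2 powi (-1) < 1 / (4 * (r p)\<^sup>2)"
  shows "\<forall>x\<in>A. achronal (connected_component_set A x) \<and>
           (\<forall>a b c. a < b \<longrightarrow> \<not> ingoing_segment a b c \<subseteq> connected_component_set A x)"
proof -
  interpret mtt_condition_A u0 v0 G \<Omega> r Tuu Tvv Tuv
    by unfold_locales
      (use G_sub II G_init smooth(1,2) Omega_pos r_nonneg I eq_uu eq_vv V eq_mu cond_A
        in \<open>auto simp: K_def m_def A_def\<close>)
  show ?thesis
  proof (intro ballI conjI allI impI)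
    fix x
    show "achronal (connected_component_set A x)"
      unfolding A_def
      by (intro connected_subset_mttA_imp_achronal connected_connected_component connected_component_subset)
  next
    fix x and a b c :: real
    assume "a < b"
    then show "\<not> ingoing_segment a b c \<subseteq> connected_component_set A x"
      using ingoing_segment_not_subset_mttA connected_component_subset[of A x] unfolding A_def by blast
  qed
qed

end
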